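(* Let $K\subset\mathbb R^d$ be compact and $q<1$. There exists $C_q>0$ such that for any $\mu\in\mathcal F(K)$ and any $r>0$ with $\mu(B(x,r))>0$ for every $x\in K$, there exists $\delta>0$ such that every $\nu\in\mathcal P(K)$ with $L(\mu,\nu)<\delta$ satisfies $I_\nu(2r,q)\le C_qI_\mu(r,q)$ and $I_\nu(r,q)\ge C_q^{-1}I_\mu(2r,q)$.
   Context: $\mathcal P(K)$ is the set of Borel probability measures on $K$, $\mathcal F(K)$ the subset of those with finite support. $L$ is the Fortet–Mourier metric $L(\mu,\nu)=\sup_f|\int fd\mu-\int fd\nu|$ over $f:K\to\mathbb R$ with $|f|\le1$ and Lipschitz constant $\le1$. $B(x,r)$ is the open ball and $I_\mu(r,q)=\int_K\mu(B(x,r))^{q-1}d\mu(x)$ (possibly $+\infty$). *)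

theory Defs
  imports "HOL-Probability.Probability"
begin

definition prob_on :: "'a::euclidean_space set \<Rightarrow> 'a measure \<Rightarrow> bool" where
  "prob_on K M \<longleftrightarrow> prob_space M \<and> sets M = sets borel \<and> measure M K = 1"

definition fin_prob_on :: "'a::euclidean_space set \<Rightarrow> 'a measure \<Rightarrow> bool" where
  "fin_prob_on K M \<longleftrightarrow> prob_on K M \<and> (\<exists>S. finite S \<and> S \<subseteq> K \<and> measure M S = 1)"

definition fortet_mourier :: "'a::euclidean_space set \<Rightarrow> 'a measure \<Rightarrow> 'a measure \<Rightarrow> real" where
  "fortet_mourier K M N = Sup {\<bar>(\<integral>x\<in>K. f x \<partial>M) - (\<integral>x\<in>K. f x \<partial>N)\<bar> | f.
      (\<forall>x\<in>K. \<bar>f x\<bar> \<le> 1) \<and> 1-lipschitz_on K f}"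

text \<open>I_mu(r,q) = \<integral>_K mu(B(x,r))^(q-1) dmu(x), valued in [0,\<infinity>];
  a zero ball mass is raised to the negative power q-1 as +\<infinity>.\<close>
definition I_mu :: "'a::euclidean_space set \<Rightarrow> 'a measure \<Rightarrow> real \<Rightarrow> real \<Rightarrow> ennreal" where
  "I_mu K M r q = (\<integral>\<^sup>+x\<in>K. (if measure M (ball x r) = 0 then \<infinity>
        else ennreal (measure M (ball x r) powr (q - 1))) \<partial>M)"

end

(*
  Let m be the smallest atom of \<mu>, so that every ball of positive \<mu>-mass has mass at least m.
  Testing the Fortet-Mourier distance against a Lipschitz bump that is 1 on B(z,r) and vanishes
  off B(z,3r/2) shows that, once L(\<mu>,\<nu>) is small, \<mu>(B(z,r)) \<le> \<nu>(B(x,2r)) + m/2 and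
  \<nu>(B(x,r)) \<le> \<mu>(B(z,2r)) + m/2 whenever |x - z| < r/2.  Consequently x \<mapsto> \<nu>(B(x,2r))^(q-1) is
  dominated on K by a Lipschitz function that is at most 2^(1-q) \<mu>(B(p,r))^(q-1) at every
  atom p, and x \<mapsto> \<nu>(B(x,r))^(q-1) dominates a Lipschitz function that is at least
  2^(q-1) \<mu>(B(p,2r))^(q-1) at every atom.  The \<nu>-integrals of these test functions differ from
  their \<mu>-integrals, which are finite sums over the atoms, by a multiple of L(\<mu>,\<nu>); since
  I_\<mu>(\<rho>,q) \<ge> 1 for q < 1 that additive error is absorbed, and C_q = 2^(2-q) works.
*)

theory Submission
  imports Defs
begin

lemma prob_onD:
  assumes "prob_on K M"
  shows "prob_space M" "sets M = sets borel" "measure M K = 1"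
  using assms by (auto simp: prob_on_def)

lemma AE_in_prob_on:
  assumes "prob_on K M" "A \<in> sets borel" "measure M A = 1"
  shows "AE x in M. x \<in> A"
  using prob_space.AE_in_set_eq_1[OF prob_onD(1)[OF assms(1)]] assms prob_onD(2)[OF assms(1)]
  by simp

lemma nn_integral_finite_support:
  fixes M :: "'a::t1_space measure"
  assumes "sets M = sets borel" "finite S" "AE x in M. x \<in> S"
  shows "(\<integral>\<^sup>+x. g x \<partial>M) = (\<Sum>p\<in>S. g p * emeasure M {p})"
proof -
  have "(\<integral>\<^sup>+x. g x \<partial>M) = (\<integral>\<^sup>+x. (\<Sum>p\<in>S. g p * indicator {p} x) \<partial>M)"
  proof (rule nn_integral_cong_AE)
    show "AE x in M. g x = (\<Sum>p\<in>S. g p * indicator {p} x)"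
      using assms(3)
    proof eventually_elim
      case (elim x)
      have "(\<Sum>p\<in>S. g p * indicator {p} x) = (\<Sum>p\<in>S. if p = x then g p else 0)"
        by (rule sum.cong) (auto simp: indicator_def)
      also have "\<dots> = g x" using elim assms(2) by simp
      finally show ?case by simp
    qed
  qed
  also have "\<dots> = (\<Sum>p\<in>S. \<integral>\<^sup>+x. g p * indicator {p} x \<partial>M)"
    by (rule nn_integral_sum) (use assms(1) in auto)
  also have "\<dots> = (\<Sum>p\<in>S. g p * emeasure M {p})"
    by (rule sum.cong) (use assms(1) in \<open>auto intro!: nn_integral_cmult_indicator\<close>)
  finally show ?thesis .
qed

lemma set_integrable_bounded_continuous:
  fixes f :: "'a::euclidean_space \<Rightarrow> real"
  assumes "prob_on K P" "compact K" "continuous_on K f" "\<forall>x\<in>K. \<bar>f x\<bar> \<le> B"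
  shows "set_integrable P K f"
proof -
  interpret prob_space P using prob_onD[OF assms(1)] by simp
  have "(\<lambda>x. indicator K x *\<^sub>R f x) \<in> borel_measurable borel"
    using assms(2,3) by (intro borel_measurable_continuous_on_indicator) (auto intro: borel_closed compact_imp_closed)
  moreover have "borel_measurable P = borel_measurable borel"
    by (rule measurable_cong_sets) (simp_all add: prob_onD[OF assms(1)])
  ultimately show ?thesis unfolding set_integrable_def
    by (intro integrable_const_bound[where B="max 0 B"] AE_I2) (use assms in \<open>auto simp: indicator_def\<close>)
qed

lemma set_integral_indicator_prob_on:
  fixes P :: "'a::euclidean_space measure"
  assumes "prob_on K P" "K \<in> sets borel" "A \<in> sets borel"
  shows "set_integrable P K (indicator A :: 'a \<Rightarrow> real)"
    and "(\<integral>x\<in>K. indicator A x \<partial>P) = measure P A"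
proof -
  interpret prob_space P using prob_onD[OF assms(1)] by simp
  have sets: "A \<in> sets P" "K \<in> sets P" using assms prob_onD(2)[OF assms(1)] by auto
  then show "set_integrable P K (indicator A :: 'a \<Rightarrow> real)" unfolding set_integrable_def
    by (intro integrable_mult_indicator integrable_real_indicator) (auto simp: less_top[symmetric])
  have "emeasure P (A \<inter> K) = emeasure P A"
    using AE_in_prob_on[OF assms(1,2) prob_onD(3)[OF assms(1)]] sets by (intro emeasure_eq_AE) auto
  moreover have "(\<lambda>x. indicator K x *\<^sub>R (indicator A x :: real)) = indicator (A \<inter> K)"
    by (auto simp: indicator_def)
  ultimately show "(\<integral>x\<in>K. indicator A x \<partial>P) = measure P A"
    using sets unfolding set_lebesgue_integral_def by (simp add: measure_def)
qed

lemma abs_set_integral_le_1: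
  fixes h :: "'a::euclidean_space \<Rightarrow> real"
  assumes "prob_on K M" "\<forall>x\<in>K. \<bar>h x\<bar> \<le> 1"
  shows "\<bar>\<integral>x\<in>K. h x \<partial>M\<bar> \<le> 1"
proof (cases "set_integrable M K h")
  case True
  interpret prob_space M using prob_onD[OF assms(1)] by simp
  have "\<bar>\<integral>x\<in>K. h x \<partial>M\<bar> \<le> integral\<^sup>L M (\<lambda>_. 1::real)"
    unfolding set_lebesgue_integral_def
    by (rule integral_abs_bound_integral) (use True assms in \<open>auto simp: set_integrable_def indicator_def\<close>)
  then show ?thesis using prob_space by simp
next
  case False
  then show ?thesis
    by (simp add: set_lebesgue_integral_def set_integrable_def not_integrable_integral_eq)
qed

lemma nn_set_integral_eq_set_integral:
  fixes f :: "'a::euclidean_space \<Rightarrow> real"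
  assumes "prob_on K P" "compact K" "continuous_on K f" "\<forall>x\<in>K. 0 \<le> f x \<and> f x \<le> B"
  shows "(\<integral>\<^sup>+x. ennreal (indicator K x * f x) \<partial>P) = ennreal (\<integral>x\<in>K. f x \<partial>P)"
proof -
  have "set_integrable P K f"
    using assms by (intro set_integrable_bounded_continuous[where B=B]) auto
  then show ?thesis unfolding set_lebesgue_integral_def set_integrable_def
    by (subst nn_integral_eq_integral) (use assms in \<open>auto simp: indicator_def\<close>)
qed

lemma set_integral_finite_support:
  fixes f :: "'a::euclidean_space \<Rightarrow> real"
  assumes P: "prob_on K P" "compact K" "continuous_on K f" "\<forall>x\<in>K. 0 \<le> f x \<and> f x \<le> B"
    and S: "finite S" "S \<subseteq> K" "measure P S = 1"
  shows "(\<integral>x\<in>K. f x \<partial>P) = (\<Sum>p\<in>S. f p * measure P {p})"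
proof -
  interpret prob_space P using prob_onD[OF P(1)] by simp
  have AE: "AE x in P. x \<in> S"
    using S by (intro AE_in_prob_on[OF P(1)]) (auto intro: borel_closed finite_imp_closed)
  have "ennreal (\<integral>x\<in>K. f x \<partial>P) = (\<integral>\<^sup>+x. ennreal (indicator K x * f x) \<partial>P)"
    using nn_set_integral_eq_set_integral[OF P] by simp
  also have "\<dots> = (\<Sum>p\<in>S. ennreal (indicator K p * f p) * emeasure P {p})"
    by (rule nn_integral_finite_support[OF prob_onD(2)[OF P(1)] S(1) AE])
  also have "\<dots> = ennreal (\<Sum>p\<in>S. f p * measure P {p})"
    using S P(4) by (subst sum_ennreal[symmetric]) (auto simp: emeasure_eq_measure ennreal_mult intro!: sum.cong)
  finally have "ennreal (\<integral>x\<in>K. f x \<partial>P) = ennreal (\<Sum>p\<in>S. f p * measure P {p})" .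
  moreover have "0 \<le> (\<Sum>p\<in>S. f p * measure P {p})" using S P(4) by (auto intro!: sum_nonneg)
  moreover have "0 \<le> (\<integral>x\<in>K. f x \<partial>P)"
    unfolding set_lebesgue_integral_def using P(4) by (auto intro!: integral_nonneg_AE simp: indicator_def)
  ultimately show ?thesis by simp
qed

section \<open>The Fortet-Mourier metric\<close>

lemma fortet_mourier_commute: "fortet_mourier K M N = fortet_mourier K N M"
  unfolding fortet_mourier_def by (simp add: abs_minus_commute)

lemma fortet_mourier_lipschitz_bound:
  fixes f :: "'a::euclidean_space \<Rightarrow> real"
  assumes M: "prob_on K M" and N: "prob_on K N" and B: "B > 0"
    and bounded: "\<forall>x\<in>K. \<bar>f x\<bar> \<le> B" and lip: "B-lipschitz_on K f"
  shows "\<bar>(\<integral>x\<in>K. f x \<partial>M) - (\<integral>x\<in>K. f x \<partial>N)\<bar> \<le> B * fortet_mourier K M N"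
proof -
  let ?g = "\<lambda>x. f x / B"
  let ?D = "\<lambda>h :: 'a \<Rightarrow> real. \<bar>(\<integral>x\<in>K. h x \<partial>M) - (\<integral>x\<in>K. h x \<partial>N)\<bar>"
  let ?S = "{?D h | h. (\<forall>x\<in>K. \<bar>h x\<bar> \<le> 1) \<and> 1-lipschitz_on K h}"
  have "1-lipschitz_on K ?g"
    using lipschitz_on_cmult_real_nonneg[OF lip, of "1/B"] B by (simp add: field_simps)
  moreover have "\<forall>x\<in>K. \<bar>?g x\<bar> \<le> 1" using bounded B by simp
  ultimately have "?D ?g \<in> ?S" by blast
  moreover have "bdd_above ?S"
  proof (rule bdd_aboveI)
    fix y assume "y \<in> ?S"
    then obtain h where "y = ?D h" "\<forall>x\<in>K. \<bar>h x\<bar> \<le> 1" by blast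
    with abs_set_integral_le_1[OF M] abs_set_integral_le_1[OF N] show "y \<le> 2" by fastforce
  qed
  ultimately have "?D ?g \<le> fortet_mourier K M N"
    unfolding fortet_mourier_def by (rule cSup_upper)
  moreover have "?D ?g = ?D f / B"
    using B by (simp add: diff_divide_distrib[symmetric])
  ultimately show ?thesis using B by (simp add: field_simps)
qed

lemma fortet_mourier_nonneg:
  assumes "prob_on K M" "prob_on K N"
  shows "0 \<le> fortet_mourier K M N"
  using fortet_mourier_lipschitz_bound[OF assms, of 1 "\<lambda>_. 0"]
  by (simp add: lipschitz_on_le[OF lipschitz_on_constant])

lemma fortet_mourier_finite_support_bound:
  fixes f :: "'a::euclidean_space \<Rightarrow> real"
  assumes \<mu>: "prob_on K \<mu>" and \<nu>: "prob_on K \<nu>" and K: "compact K"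
    and S: "finite S" "S \<subseteq> K" "measure \<mu> S = 1"
    and B: "B > 0" and f: "B-lipschitz_on K f" "\<forall>x\<in>K. 0 \<le> f x \<and> f x \<le> B"
  shows "\<bar>(\<integral>x\<in>K. f x \<partial>\<nu>) - (\<Sum>p\<in>S. f p * measure \<mu> {p})\<bar> \<le> B * fortet_mourier K \<mu> \<nu>"
proof -
  have "(\<integral>x\<in>K. f x \<partial>\<mu>) = (\<Sum>p\<in>S. f p * measure \<mu> {p})"
    using f by (intro set_integral_finite_support[OF \<mu> K _ _ S]) (auto intro: lipschitz_on_continuous_on)
  moreover have "\<bar>(\<integral>x\<in>K. f x \<partial>\<mu>) - (\<integral>x\<in>K. f x \<partial>\<nu>)\<bar> \<le> B * fortet_mourier K \<mu> \<nu>"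
    using f by (intro fortet_mourier_lipschitz_bound[OF \<mu> \<nu> B]) auto
  ultimately show ?thesis by (simp add: abs_minus_commute)
qed

lemma measure_le_fortet_mourier:
  fixes M N :: "'a::euclidean_space measure"
  assumes M: "prob_on K M" and N: "prob_on K N" and K: "compact K"
    and w: "w > 0" and B: "max 1 (1/w) \<le> B"
    and A: "A \<subseteq> cball z (c - w)" "A \<in> sets borel" and D: "ball z c \<subseteq> D" "D \<in> sets borel"
  shows "measure M A \<le> measure N D + B * fortet_mourier K M N"
proof -
  define f where "f y = max 0 (min 1 ((c - dist y z) / w))" for y
  have Kb: "K \<in> sets borel" using K by (simp add: compact_imp_closed borel_closed)
  have "(1/w)-lipschitz_on K f"
  proof (rule lipschitz_onI)
    fix x y
    have "dist (f x) (f y) \<le> \<bar>(c - dist x z) / w - (c - dist y z) / w\<bar>"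
      unfolding f_def dist_real_def by (simp add: max_def min_def abs_if)
    also have "\<dots> = \<bar>dist y z - dist x z\<bar> / w"
      using w by (simp add: diff_divide_distrib[symmetric])
    also have "\<dots> \<le> dist x y / w"
      using w dist_triangle[of x z y] dist_triangle[of y z x] dist_commute[of x y]
      by (intro divide_right_mono) (auto simp: abs_le_iff)
    finally show "dist (f x) (f y) \<le> 1 / w * dist x y" by simp
  qed (use w in simp)
  then have lip: "B-lipschitz_on K f" and cont: "continuous_on K f"
    using B by (auto intro: lipschitz_on_le lipschitz_on_continuous_on)
  have f_bounds: "\<forall>x\<in>K. \<bar>f x\<bar> \<le> 1" by (auto simp: f_def)
  have indicator_le_f: "indicator A x \<le> f x" for x
    using A w by (auto simp: f_def indicator_def dist_commute field_simps)
  have f_le_indicator: "f x \<le> indicator D x" for x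
  proof (cases "x \<in> D")
    case False
    then have "c \<le> dist x z" using D by (metis dist_commute mem_ball not_le subsetD)
    then show ?thesis using False w by (simp add: f_def divide_nonpos_pos)
  qed (auto simp: f_def)
  have sandwich: "measure P A \<le> (\<integral>x\<in>K. f x \<partial>P) \<and> (\<integral>x\<in>K. f x \<partial>P) \<le> measure P D"
    if P: "prob_on K P" for P
  proof -
    have fi: "set_integrable P K f" by (rule set_integrable_bounded_continuous[OF P K cont f_bounds])
    note ind = set_integral_indicator_prob_on[OF P Kb]
    show ?thesis
      using set_integral_mono[OF ind(1)[OF A(2)] fi] set_integral_mono[OF fi ind(1)[OF D(2)]]
        indicator_le_f f_le_indicator by (simp add: ind(2) A(2) D(2))
  qed
  have "\<bar>(\<integral>x\<in>K. f x \<partial>M) - (\<integral>x\<in>K. f x \<partial>N)\<bar> \<le> B * fortet_mourier K M N"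
    using B f_bounds by (intro fortet_mourier_lipschitz_bound[OF M N _ _ lip]) auto
  with sandwich[OF M] sandwich[OF N] show ?thesis by linarith
qed

section \<open>Lipschitz envelopes\<close>

lemma lipschitz_on_min:
  fixes f g :: "'a::metric_space \<Rightarrow> real"
  assumes "L-lipschitz_on X f" "L-lipschitz_on X g"
  shows "L-lipschitz_on X (\<lambda>x. min (f x) (g x))"
proof (rule lipschitz_onI)
  fix x y assume "x \<in> X" "y \<in> X"
  then have "\<bar>f x - f y\<bar> \<le> L * dist x y" "\<bar>g x - g y\<bar> \<le> L * dist x y"
    using assms by (auto simp: lipschitz_on_def dist_real_def)
  then show "dist (min (f x) (g x)) (min (f y) (g y)) \<le> L * dist x y"
    by (simp add: dist_real_def min_def abs_le_iff)
qed (use assms lipschitz_on_nonneg in auto)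

lemma lipschitz_on_max:
  fixes f g :: "'a::metric_space \<Rightarrow> real"
  assumes "L-lipschitz_on X f" "L-lipschitz_on X g"
  shows "L-lipschitz_on X (\<lambda>x. max (f x) (g x))"
proof (rule lipschitz_onI)
  fix x y assume "x \<in> X" "y \<in> X"
  then have "\<bar>f x - f y\<bar> \<le> L * dist x y" "\<bar>g x - g y\<bar> \<le> L * dist x y"
    using assms by (auto simp: lipschitz_on_def dist_real_def)
  then show "dist (max (f x) (g x)) (max (f y) (g y)) \<le> L * dist x y"
    by (simp add: dist_real_def max_def abs_le_iff)
qed (use assms lipschitz_on_nonneg in auto)

lemma lipschitz_on_Min:
  fixes g :: "'b \<Rightarrow> 'a::metric_space \<Rightarrow> real"
  assumes "finite S" "S \<noteq> {}" "\<And>p. p \<in> S \<Longrightarrow> L-lipschitz_on X (g p)"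
  shows "L-lipschitz_on X (\<lambda>x. Min ((\<lambda>p. g p x) ` S))"
  using assms
proof (induction S rule: finite_ne_induct)
  case (insert p S)
  then show ?case by (simp add: lipschitz_on_min)
qed simp

lemma lipschitz_on_Max:
  fixes g :: "'b \<Rightarrow> 'a::metric_space \<Rightarrow> real"
  assumes "finite S" "S \<noteq> {}" "\<And>p. p \<in> S \<Longrightarrow> L-lipschitz_on X (g p)"
  shows "L-lipschitz_on X (\<lambda>x. Max ((\<lambda>p. g p x) ` S))"
  using assms
proof (induction S rule: finite_ne_induct)
  case (insert p S)
  then show ?case by (simp add: lipschitz_on_max)
qed simp

lemma lipschitz_on_dist_point: "1-lipschitz_on X (\<lambda>x. dist x p)"
proof (rule lipschitz_onI)
  fix x y
  show "dist (dist x p) (dist y p) \<le> 1 * dist x y"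
    using dist_triangle[of x p y] dist_triangle[of y p x]
    by (simp add: dist_real_def dist_commute abs_le_iff)
qed simp

lemma lipschitz_on_const_plus_dist:
  assumes "0 \<le> L"
  shows "L-lipschitz_on X (\<lambda>x. c + L * dist x p)" and "L-lipschitz_on X (\<lambda>x. c - L * dist x p)"
  using lipschitz_on_add[OF lipschitz_on_constant lipschitz_on_cmult_real_nonneg[OF lipschitz_on_dist_point assms]]
    lipschitz_on_diff[OF lipschitz_on_constant lipschitz_on_cmult_real_nonneg[OF lipschitz_on_dist_point assms]]
  by simp_all


section \<open>Ball masses of finitely supported measures\<close>

lemma finite_support_measure_lower_bound:
  fixes M :: "'a::euclidean_space measure"
  assumes M: "prob_on K M" and S: "finite S" "measure M S = 1"
  obtains m where "m > 0" "\<And>A. A \<in> sets borel \<Longrightarrow> measure M A > 0 \<Longrightarrow> m \<le> measure M A"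
proof -
  interpret prob_space M using prob_onD[OF M] by simp
  have sets_M: "sets M = sets borel" using prob_onD(2)[OF M] .
  have AE: "AE x in M. x \<in> S"
    using S by (intro AE_in_prob_on[OF M]) (auto intro: borel_closed finite_imp_closed)
  define T where "T = {p \<in> S. measure M {p} > 0}"
  define m where "m = Min (insert 1 ((\<lambda>p. measure M {p}) ` T))"
  have "m > 0" using S(1) by (auto simp: m_def T_def)
  moreover have "m \<le> measure M A" if A: "A \<in> sets borel" "measure M A > 0" for A
  proof -
    have "emeasure M A = (\<integral>\<^sup>+y. indicator A y \<partial>M)" using A sets_M by simp
    also have "\<dots> = (\<Sum>p\<in>S. indicator A p * emeasure M {p})"
      by (rule nn_integral_finite_support[OF sets_M S(1) AE])
    finally have "(\<Sum>p\<in>S. indicator A p * emeasure M {p}) \<noteq> 0"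
      using A(2) by (metis emeasure_eq_measure ennreal_eq_0_iff not_less)
    then obtain p where p: "p \<in> S" "p \<in> A" "measure M {p} \<noteq> 0"
      by (metis (mono_tags, lifting) emeasure_eq_measure ennreal_0 indicator_simps(2) mult_eq_0_iff sum.neutral)
    then have "p \<in> T" by (auto simp: T_def zero_less_measure_iff)
    then have "m \<le> measure M {p}" using S(1) by (auto simp: m_def T_def)
    also have "\<dots> \<le> measure M A" using p A sets_M by (intro finite_measure_mono) auto
    finally show ?thesis .
  qed
  ultimately show ?thesis using that by blast
qed

lemma I_mu_finite_support:
  fixes M :: "'a::euclidean_space measure"
  assumes M: "prob_on K M" and S: "finite S" "S \<subseteq> K" "measure M S = 1"
    and pos: "\<forall>p\<in>S. measure M (ball p \<rho>) > 0"
  shows "I_mu K M \<rho> q = ennreal (\<Sum>p\<in>S. measure M (ball p \<rho>) powr (q - 1) * measure M {p})"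
proof -
  interpret prob_space M using prob_onD[OF M] by simp
  have AE: "AE x in M. x \<in> S"
    using S by (intro AE_in_prob_on[OF M]) (auto intro: borel_closed finite_imp_closed)
  have "I_mu K M \<rho> q = (\<Sum>p\<in>S. ((if measure M (ball p \<rho>) = 0 then \<infinity>
        else ennreal (measure M (ball p \<rho>) powr (q - 1))) * indicator K p) * emeasure M {p})"
    unfolding I_mu_def by (rule nn_integral_finite_support[OF prob_onD(2)[OF M] S(1) AE])
  also have "\<dots> = ennreal (\<Sum>p\<in>S. measure M (ball p \<rho>) powr (q - 1) * measure M {p})"
    using S pos by (subst sum_ennreal[symmetric])
      (auto simp: emeasure_eq_measure ennreal_mult subset_iff intro!: sum.cong)
  finally show ?thesis .
qed

lemma one_le_ball_mass_sum:
  fixes M :: "'a::euclidean_space measure"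
  assumes M: "prob_on K M" and S: "finite S" "measure M S = 1"
    and pos: "\<forall>p\<in>S. measure M (ball p \<rho>) > 0" and q: "q \<le> 1"
  shows "1 \<le> (\<Sum>p\<in>S. measure M (ball p \<rho>) powr (q - 1) * measure M {p})"
proof -
  interpret prob_space M using prob_onD[OF M] by simp
  have "1 = (\<Sum>p\<in>S. measure M {p})"
    using S finite_measure_eq_sum_singleton[OF S(1)] prob_onD(2)[OF M] by simp
  also have "\<dots> \<le> (\<Sum>p\<in>S. measure M (ball p \<rho>) powr (q - 1) * measure M {p})"
  proof (rule sum_mono)
    fix p assume "p \<in> S"
    then have "1 powr (q - 1) \<le> measure M (ball p \<rho>) powr (q - 1)"
      using q pos by (intro powr_mono2') auto
    then show "measure M {p} \<le> measure M (ball p \<rho>) powr (q - 1) * measure M {p}"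
      by (simp add: mult_le_cancel_right1)
  qed
  finally show ?thesis .
qed

lemma I_mu_le_set_integral:
  fixes \<psi> :: "'a::euclidean_space \<Rightarrow> real"
  assumes P: "prob_on K P" "compact K" "continuous_on K \<psi>" "\<forall>x\<in>K. 0 \<le> \<psi> x \<and> \<psi> x \<le> B"
    and above: "\<And>x. x \<in> K \<Longrightarrow> measure P (ball x \<rho>) > 0 \<and> measure P (ball x \<rho>) powr (q - 1) \<le> \<psi> x"
  shows "I_mu K P \<rho> q \<le> ennreal (\<integral>x\<in>K. \<psi> x \<partial>P)"
proof -
  have "I_mu K P \<rho> q \<le> (\<integral>\<^sup>+x. ennreal (indicator K x * \<psi> x) \<partial>P)"
    unfolding I_mu_def by (intro nn_integral_mono) (auto simp: indicator_def ennreal_leI dest: above)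
  also have "\<dots> = ennreal (\<integral>x\<in>K. \<psi> x \<partial>P)"
    by (rule nn_set_integral_eq_set_integral[OF P])
  finally show ?thesis .
qed

lemma set_integral_le_I_mu:
  fixes \<phi> :: "'a::euclidean_space \<Rightarrow> real"
  assumes P: "prob_on K P" "compact K" "continuous_on K \<phi>" "\<forall>x\<in>K. 0 \<le> \<phi> x \<and> \<phi> x \<le> B"
    and below: "\<And>x. x \<in> K \<Longrightarrow> measure P (ball x \<rho>) > 0 \<Longrightarrow> \<phi> x \<le> measure P (ball x \<rho>) powr (q - 1)"
  shows "ennreal (\<integral>x\<in>K. \<phi> x \<partial>P) \<le> I_mu K P \<rho> q"
proof -
  have "ennreal (\<integral>x\<in>K. \<phi> x \<partial>P) = (\<integral>\<^sup>+x. ennreal (indicator K x * \<phi> x) \<partial>P)"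
    by (rule nn_set_integral_eq_set_integral[OF P, symmetric])
  also have "\<dots> \<le> I_mu K P \<rho> q"
    unfolding I_mu_def using below measure_nonneg[of P]
    by (intro nn_integral_mono) (auto simp: indicator_def ennreal_leI order_less_le)
  finally show ?thesis .
qed

section \<open>Comparison of ball masses under a small Fortet-Mourier distance\<close>

text \<open>The constant \<open>(m/2) powr (q-1) * max 1 (2/r)\<close> dominates the sup-norm and the Lipschitz
  constant of every test function used below.\<close>
locale ball_mass_comparison =
  fixes K :: "'a::euclidean_space set" and \<mu> \<nu> :: "'a measure" and S :: "'a set" and r q m :: real
  assumes compact_K: "compact K" and q: "q < 1" and r: "r > 0"
    and \<mu>: "prob_on K \<mu>" and \<nu>: "prob_on K \<nu>"
    and S: "finite S" "S \<subseteq> K" "measure \<mu> S = 1"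
    and m: "m > 0" "\<And>x. x \<in> K \<Longrightarrow> m \<le> measure \<mu> (ball x r)"
    and fortet_mourier_small:
      "(m/2) powr (q-1) * max 1 (2/r) * fortet_mourier K \<mu> \<nu> \<le> min (m/2) (2 powr (q-2))"
begin

definition cap :: real where "cap = (m/2) powr (q-1)"

definition slope :: real where "slope = 2 * cap / r"

lemma cap_ge_1: "1 \<le> cap"
proof -
  interpret prob_space \<mu> using prob_onD(1)[OF \<mu>] .
  obtain p where "p \<in> S" using S(3) by fastforce
  then have "m \<le> 1" using m(2)[of p] S(2) prob_le_1[of "ball p r"] by (meson order_trans subsetD)
  then have "1 powr (q-1) \<le> (m/2) powr (q-1)" using q m(1) by (intro powr_mono2') auto
  then show ?thesis by (simp add: cap_def)
qed

lemma slope_nonneg: "0 \<le> slope"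
  using cap_ge_1 r by (simp add: slope_def)

lemma S_nonempty: "S \<noteq> {}"
  using S(3) by auto

lemma mass_ball_double:
  assumes "x \<in> K"
  shows "m \<le> measure \<mu> (ball x (2*r))"
proof -
  interpret prob_space \<mu> using prob_onD(1)[OF \<mu>] .
  have "measure \<mu> (ball x r) \<le> measure \<mu> (ball x (2*r))"
    using r by (intro finite_measure_mono) (auto simp: prob_onD(2)[OF \<mu>])
  then show ?thesis using m(2)[OF assms] by linarith
qed

lemma cap_le_slope_dist:
  assumes "r/2 \<le> dist x p"
  shows "cap \<le> slope * dist x p"
  using assms slope_nonneg r mult_left_mono[of "r/2" "dist x p" slope] by (simp add: slope_def)

lemma fortet_mourier_scaled:
  "max 1 (2/r) * fortet_mourier K \<mu> \<nu> \<le> m/2" "cap * max 1 (2/r) * fortet_mourier K \<mu> \<nu> \<le> 2 powr (q-2)"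
proof -
  have "0 \<le> fortet_mourier K \<mu> \<nu>" by (rule fortet_mourier_nonneg[OF \<mu> \<nu>])
  moreover have "max 1 (2/r) \<le> cap * max 1 (2/r)"
    using cap_ge_1 by (simp add: mult_le_cancel_right1)
  ultimately have "max 1 (2/r) * fortet_mourier K \<mu> \<nu> \<le> cap * max 1 (2/r) * fortet_mourier K \<mu> \<nu>"
    by (rule mult_right_mono[rotated])
  then show "max 1 (2/r) * fortet_mourier K \<mu> \<nu> \<le> m/2"
    using fortet_mourier_small by (simp add: cap_def)
  show "cap * max 1 (2/r) * fortet_mourier K \<mu> \<nu> \<le> 2 powr (q-2)"
    using fortet_mourier_small by (simp add: cap_def)
qed

lemma ball_mass_transfer:
  assumes "dist x z < r/2"
  shows "measure \<mu> (ball z r) \<le> measure \<nu> (ball x (2*r)) + m/2"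
    and "measure \<nu> (ball x r) \<le> measure \<mu> (ball z (2*r)) + m/2"
proof -
  have r2: "r/2 > 0" "max 1 (1/(r/2)) = max 1 (2/r)" using r by auto
  have "ball z (3*r/2) \<subseteq> ball x (2*r)"
  proof
    fix y assume "y \<in> ball z (3*r/2)"
    then show "y \<in> ball x (2*r)" using assms dist_triangle[of x y z] by simp
  qed
  moreover have "ball z r \<subseteq> cball z (3*r/2 - r/2)" by auto
  ultimately have "measure \<mu> (ball z r) \<le> measure \<nu> (ball x (2*r)) + max 1 (2/r) * fortet_mourier K \<mu> \<nu>"
    using r2 measure_le_fortet_mourier[OF \<mu> \<nu> compact_K, of "r/2" "max 1 (2/r)" "ball z r" z "3*r/2"]
    by auto
  then show "measure \<mu> (ball z r) \<le> measure \<nu> (ball x (2*r)) + m/2"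
    using fortet_mourier_scaled(1) by linarith
  have "ball x r \<subseteq> cball z (2*r - r/2)"
  proof
    fix y assume "y \<in> ball x r"
    then show "y \<in> cball z (2*r - r/2)" using assms dist_triangle[of z y x] by (simp add: dist_commute)
  qed
  then have "measure \<nu> (ball x r) \<le> measure \<mu> (ball z (2*r)) + max 1 (2/r) * fortet_mourier K \<nu> \<mu>"
    using r2 measure_le_fortet_mourier[OF \<nu> \<mu> compact_K, of "r/2" "max 1 (2/r)" "ball x r" z "2*r"]
    by auto
  then show "measure \<nu> (ball x r) \<le> measure \<mu> (ball z (2*r)) + m/2"
    using fortet_mourier_scaled(1) by (simp add: fortet_mourier_commute)
qed

lemma test_function_bound:
  assumes "slope-lipschitz_on K f" "\<forall>x\<in>K. 0 \<le> f x \<and> f x \<le> cap"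
  shows "\<bar>(\<integral>x\<in>K. f x \<partial>\<nu>) - (\<Sum>p\<in>S. f p * measure \<mu> {p})\<bar> \<le> 2 powr (q-2)"
proof -
  define B where "B = cap * max 1 (2/r)"
  have "cap \<le> B" "B > 0" using cap_ge_1 by (auto simp: B_def mult_le_cancel_left1)
  moreover have "slope \<le> B"
    using cap_ge_1 mult_left_mono[of "2/r" "max 1 (2/r)" cap] by (simp add: B_def slope_def mult.commute)
  ultimately have "\<bar>(\<integral>x\<in>K. f x \<partial>\<nu>) - (\<Sum>p\<in>S. f p * measure \<mu> {p})\<bar> \<le> B * fortet_mourier K \<mu> \<nu>"
    using assms by (intro fortet_mourier_finite_support_bound[OF \<mu> \<nu> compact_K S])
      (auto intro: lipschitz_on_le order_trans)
  then show ?thesis using fortet_mourier_scaled(2) by (simp add: B_def)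
qed

definition upper_envelope :: "'a \<Rightarrow> real" where
  "upper_envelope x =
    min cap (Min ((\<lambda>p. 2 powr (1-q) * measure \<mu> (ball p r) powr (q-1) + slope * dist x p) ` S))"

lemma upper_envelope_bounds: "0 \<le> upper_envelope x \<and> upper_envelope x \<le> cap"
  using S(1) S_nonempty cap_ge_1 slope_nonneg by (auto simp: upper_envelope_def)

lemma upper_envelope_lipschitz: "slope-lipschitz_on K upper_envelope"
  unfolding upper_envelope_def
  by (intro lipschitz_on_min lipschitz_on_Min S(1) S_nonempty lipschitz_on_const_plus_dist slope_nonneg
      lipschitz_on_le[OF lipschitz_on_constant])

lemma upper_envelope_atom:
  "p \<in> S \<Longrightarrow> upper_envelope p \<le> 2 powr (1-q) * measure \<mu> (ball p r) powr (q-1)"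
  using S(1) by (auto simp: upper_envelope_def intro!: min.coboundedI2 Min.coboundedI[THEN order_trans])

lemma upper_envelope_majorant:
  assumes x: "x \<in> K"
  shows "0 < measure \<nu> (ball x (2*r)) \<and> measure \<nu> (ball x (2*r)) powr (q-1) \<le> upper_envelope x"
proof -
  let ?\<nu>x = "measure \<nu> (ball x (2*r))"
  have \<nu>x: "m/2 \<le> ?\<nu>x" using ball_mass_transfer(1)[of x x] m(2)[OF x] r by simp
  have le_cap: "?\<nu>x powr (q-1) \<le> cap"
    unfolding cap_def using q m(1) \<nu>x by (intro powr_mono2') auto
  have "?\<nu>x powr (q-1) \<le> 2 powr (1-q) * measure \<mu> (ball p r) powr (q-1) + slope * dist x p"
    if p: "p \<in> S" for p
  proof (cases "dist x p < r/2")
    case True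
    have "m \<le> measure \<mu> (ball p r)" using m(2) p S(2) by auto
    then have "measure \<mu> (ball p r) / 2 \<le> ?\<nu>x" using ball_mass_transfer(1)[OF True] by linarith
    then have "?\<nu>x powr (q-1) \<le> (measure \<mu> (ball p r) / 2) powr (q-1)"
      using q m(1) \<open>m \<le> measure \<mu> (ball p r)\<close> by (intro powr_mono2') auto
    also have "\<dots> = 2 powr (1-q) * measure \<mu> (ball p r) powr (q-1)"
      by (simp add: powr_divide powr_minus_divide[of 2 "q-1", simplified] field_simps)
    finally show ?thesis using slope_nonneg by (simp add: add_increasing2)
  next
    case False
    then have "cap \<le> slope * dist x p" by (intro cap_le_slope_dist) simp
    then show ?thesis using le_cap by (simp add: add_increasing)
  qed
  then show ?thesis
    using \<nu>x m(1) le_cap S(1) S_nonempty by (simp add: upper_envelope_def)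
qed

lemma I_mu_double_radius_le: "I_mu K \<nu> (2*r) q \<le> ennreal (2 powr (2-q)) * I_mu K \<mu> r q"
proof -
  define I where "I = (\<Sum>p\<in>S. measure \<mu> (ball p r) powr (q-1) * measure \<mu> {p})"
  have pos: "\<forall>p\<in>S. 0 < measure \<mu> (ball p r)" using m S(2) by (meson less_le_trans subsetD)
  have I_ge_1: "1 \<le> I" unfolding I_def using one_le_ball_mass_sum[OF \<mu> S(1,3) pos] q by simp
  have "I_mu K \<nu> (2*r) q \<le> ennreal (\<integral>x\<in>K. upper_envelope x \<partial>\<nu>)"
    by (rule I_mu_le_set_integral[OF \<nu> compact_K lipschitz_on_continuous_on[OF upper_envelope_lipschitz]])
      (use upper_envelope_bounds upper_envelope_majorant in auto)
  also have "\<dots> \<le> ennreal (2 powr (2-q) * I)"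
  proof (rule ennreal_leI)
    have "(\<Sum>p\<in>S. upper_envelope p * measure \<mu> {p}) \<le> 2 powr (1-q) * I"
      unfolding I_def sum_distrib_left
      using mult_right_mono[OF upper_envelope_atom measure_nonneg] by (intro sum_mono) (simp add: mult.assoc)
    moreover have "(\<integral>x\<in>K. upper_envelope x \<partial>\<nu>) \<le> (\<Sum>p\<in>S. upper_envelope p * measure \<mu> {p}) + 2 powr (q-2)"
      using test_function_bound[OF upper_envelope_lipschitz] upper_envelope_bounds by (simp add: abs_le_iff)
    moreover have "2 powr (q-2) \<le> 1" "1 \<le> 2 powr (1-q)" "2 powr (2-q) * I = 2 * (2 powr (1-q) * I)"
      using q powr_mono[of "q-2" 0 2] powr_mono[of 0 "1-q" 2] powr_add[of 2 1 "1-q"] by simp_all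
    moreover have "I \<le> 2 powr (1-q) * I" using calculation(4) I_ge_1 by (simp add: mult_le_cancel_right1)
    ultimately show "(\<integral>x\<in>K. upper_envelope x \<partial>\<nu>) \<le> 2 powr (2-q) * I" using I_ge_1 by linarith
  qed
  also have "\<dots> = ennreal (2 powr (2-q)) * I_mu K \<mu> r q"
    using I_mu_finite_support[OF \<mu> S pos] I_ge_1 by (simp add: I_def ennreal_mult)
  finally show ?thesis .
qed

definition lower_envelope :: "'a \<Rightarrow> real" where
  "lower_envelope x =
    max 0 (Max ((\<lambda>p. 2 powr (q-1) * measure \<mu> (ball p (2*r)) powr (q-1) - slope * dist x p) ` S))"

lemma lower_envelope_peak_le_cap:
  assumes "p \<in> S"
  shows "2 powr (q-1) * measure \<mu> (ball p (2*r)) powr (q-1) \<le> cap"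
proof -
  have "2 powr (q-1) \<le> 1" using q powr_mono[of "q-1" 0 2] by simp
  then have "2 powr (q-1) * measure \<mu> (ball p (2*r)) powr (q-1) \<le> measure \<mu> (ball p (2*r)) powr (q-1)"
    by (simp add: mult_left_le_one_le)
  also have "\<dots> \<le> cap"
    unfolding cap_def using q m(1) mass_ball_double[of p] assms S(2) by (intro powr_mono2') auto
  finally show ?thesis .
qed

lemma lower_envelope_bounds: "0 \<le> lower_envelope x \<and> lower_envelope x \<le> cap"
proof -
  have "2 powr (q-1) * measure \<mu> (ball p (2*r)) powr (q-1) - slope * dist x p \<le> cap" if "p \<in> S" for p
    using lower_envelope_peak_le_cap[OF that] mult_nonneg_nonneg[OF slope_nonneg zero_le_dist[of x p]] by linarith
  then show ?thesis using S(1) S_nonempty cap_ge_1 by (auto simp: lower_envelope_def)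
qed

lemma lower_envelope_lipschitz: "slope-lipschitz_on K lower_envelope"
  unfolding lower_envelope_def
  by (intro lipschitz_on_max lipschitz_on_Max S(1) S_nonempty lipschitz_on_const_plus_dist slope_nonneg
      lipschitz_on_le[OF lipschitz_on_constant])

lemma lower_envelope_atom:
  "p \<in> S \<Longrightarrow> 2 powr (q-1) * measure \<mu> (ball p (2*r)) powr (q-1) \<le> lower_envelope p"
  using S(1) by (auto simp: lower_envelope_def intro!: max.coboundedI2 Max.coboundedI[THEN order_trans[rotated]])

lemma lower_envelope_minorant:
  assumes x: "x \<in> K" and pos: "0 < measure \<nu> (ball x r)"
  shows "lower_envelope x \<le> measure \<nu> (ball x r) powr (q-1)"
proof -
  let ?\<nu>x = "measure \<nu> (ball x r)"
  have "2 powr (q-1) * measure \<mu> (ball p (2*r)) powr (q-1) - slope * dist x p \<le> ?\<nu>x powr (q-1)"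
    if p: "p \<in> S" for p
  proof (cases "dist x p < r/2")
    case True
    have "m \<le> measure \<mu> (ball p (2*r))" using mass_ball_double p S(2) by auto
    then have "?\<nu>x \<le> 2 * measure \<mu> (ball p (2*r))" using ball_mass_transfer(2)[OF True] m(1) by linarith
    then have "(2 * measure \<mu> (ball p (2*r))) powr (q-1) \<le> ?\<nu>x powr (q-1)"
      using q pos by (intro powr_mono2') auto
    moreover have "0 \<le> slope * dist x p" using slope_nonneg by simp
    ultimately show ?thesis by (simp add: powr_mult)
  next
    case False
    then have "cap \<le> slope * dist x p" by (intro cap_le_slope_dist) simp
    moreover have "0 \<le> ?\<nu>x powr (q-1)" by simp
    ultimately show ?thesis using lower_envelope_peak_le_cap[OF p] by linarith
  qed
  then show ?thesis using S(1) S_nonempty by (simp add: lower_envelope_def)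
qed

lemma I_mu_half_radius_ge: "ennreal (1 / 2 powr (2-q)) * I_mu K \<mu> (2*r) q \<le> I_mu K \<nu> r q"
proof -
  define I where "I = (\<Sum>p\<in>S. measure \<mu> (ball p (2*r)) powr (q-1) * measure \<mu> {p})"
  have pos: "\<forall>p\<in>S. 0 < measure \<mu> (ball p (2*r))"
    using m(1) mass_ball_double S(2) by (meson less_le_trans subsetD)
  have I_ge_1: "1 \<le> I" unfolding I_def using one_le_ball_mass_sum[OF \<mu> S(1,3) pos] q by simp
  have "ennreal (1 / 2 powr (2-q)) * I_mu K \<mu> (2*r) q = ennreal (2 powr (q-2) * I)"
    using I_mu_finite_support[OF \<mu> S pos] I_ge_1
    by (simp add: I_def ennreal_mult powr_minus_divide[of 2 "q-2", simplified])
  also have "\<dots> \<le> ennreal (\<integral>x\<in>K. lower_envelope x \<partial>\<nu>)"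
  proof (rule ennreal_leI)
    have "2 powr (q-1) * I \<le> (\<Sum>p\<in>S. lower_envelope p * measure \<mu> {p})"
      unfolding I_def sum_distrib_left
      using mult_right_mono[OF lower_envelope_atom measure_nonneg] by (intro sum_mono) (simp add: mult.assoc)
    moreover have "(\<Sum>p\<in>S. lower_envelope p * measure \<mu> {p}) - 2 powr (q-2) \<le> (\<integral>x\<in>K. lower_envelope x \<partial>\<nu>)"
      using test_function_bound[OF lower_envelope_lipschitz] lower_envelope_bounds by (simp add: abs_le_iff)
    moreover have "2 powr (q-1) * I = 2 * (2 powr (q-2) * I)" "2 powr (q-2) \<le> 2 powr (q-2) * I"
      using powr_add[of 2 1 "q-2"] I_ge_1 by (simp_all add: mult_le_cancel_left1)
    ultimately show "2 powr (q-2) * I \<le> (\<integral>x\<in>K. lower_envelope x \<partial>\<nu>)" by linarith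
  qed
  also have "\<dots> \<le> I_mu K \<nu> r q"
    by (rule set_integral_le_I_mu[OF \<nu> compact_K lipschitz_on_continuous_on[OF lower_envelope_lipschitz]])
      (use lower_envelope_bounds lower_envelope_minorant in auto)
  finally show ?thesis .
qed

end

lemma I_mu_comparison_near_finite_support:
  fixes K :: "'a::euclidean_space set"
  assumes K: "compact K" and q: "q < 1" and \<mu>: "fin_prob_on K \<mu>" and r: "r > 0"
    and pos: "\<forall>x\<in>K. measure \<mu> (ball x r) > 0"
  shows "\<exists>\<delta>>0. \<forall>\<nu>. prob_on K \<nu> \<and> fortet_mourier K \<mu> \<nu> < \<delta> \<longrightarrow>
           I_mu K \<nu> (2 * r) q \<le> ennreal (2 powr (2-q)) * I_mu K \<mu> r q \<and>
           I_mu K \<nu> r q \<ge> ennreal (1 / 2 powr (2-q)) * I_mu K \<mu> (2 * r) q"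
proof -
  obtain S where S: "finite S" "S \<subseteq> K" "measure \<mu> S = 1" and P: "prob_on K \<mu>"
    using \<mu> by (auto simp: fin_prob_on_def)
  obtain m where m: "m > 0" "\<And>A. A \<in> sets borel \<Longrightarrow> measure \<mu> A > 0 \<Longrightarrow> m \<le> measure \<mu> A"
    using finite_support_measure_lower_bound[OF P S(1,3)] by blast
  define c where "c = (m/2) powr (q-1) * max 1 (2/r)"
  have "c > 0" using m(1) by (simp add: c_def)
  show ?thesis
  proof (intro exI[of _ "min (m/2) (2 powr (q-2)) / c"] conjI allI impI)
    show "min (m/2) (2 powr (q-2)) / c > 0" using \<open>c > 0\<close> m(1) by simp
    fix \<nu> assume \<nu>: "prob_on K \<nu> \<and> fortet_mourier K \<mu> \<nu> < min (m/2) (2 powr (q-2)) / c"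
    have "c * fortet_mourier K \<mu> \<nu> \<le> min (m/2) (2 powr (q-2))"
      using \<nu> \<open>c > 0\<close> by (simp add: pos_less_divide_eq mult.commute less_imp_le)
    moreover have "m \<le> measure \<mu> (ball x r)" if "x \<in> K" for x
      using m(2)[of "ball x r"] pos that by simp
    ultimately interpret ball_mass_comparison K \<mu> \<nu> S r q m
      using K q r P \<nu> S m(1) by unfold_locales (simp_all add: c_def)
    show "I_mu K \<nu> (2 * r) q \<le> ennreal (2 powr (2-q)) * I_mu K \<mu> r q"
      by (rule I_mu_double_radius_le)
    show "I_mu K \<nu> r q \<ge> ennreal (1 / 2 powr (2-q)) * I_mu K \<mu> (2 * r) q"
      by (rule I_mu_half_radius_ge)
  qed
qed

theorem corollary2p3:
  fixes K :: "'a::euclidean_space set" and q :: real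
  assumes "compact K" and "q < 1"
  shows "\<exists>C>0. \<forall>\<mu> r. fin_prob_on K \<mu> \<and> r > 0 \<and> (\<forall>x\<in>K. measure \<mu> (ball x r) > 0) \<longrightarrow>
           (\<exists>\<delta>>0. \<forall>\<nu>. prob_on K \<nu> \<and> fortet_mourier K \<mu> \<nu> < \<delta> \<longrightarrow>
              I_mu K \<nu> (2 * r) q \<le> ennreal C * I_mu K \<mu> r q \<and>
              I_mu K \<nu> r q \<ge> ennreal (1 / C) * I_mu K \<mu> (2 * r) q)"
proof (rule exI[of _ "2 powr (2-q)"], intro conjI allI impI)
  fix \<mu> r assume hyp: "fin_prob_on K \<mu> \<and> r > 0 \<and> (\<forall>x\<in>K. measure \<mu> (ball x r) > 0)"
  show "\<exists>\<delta>>0. \<forall>\<nu>. prob_on K \<nu> \<and> fortet_mourier K \<mu> \<nu> < \<delta> \<longrightarrow>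
      I_mu K \<nu> (2 * r) q \<le> ennreal (2 powr (2-q)) * I_mu K \<mu> r q \<and>
      I_mu K \<nu> r q \<ge> ennreal (1 / 2 powr (2-q)) * I_mu K \<mu> (2 * r) q"
    by (rule I_mu_comparison_near_finite_support[OF assms]) (use hyp in auto)
qed simp

end
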